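(* Let $E_3=(S^*,V_1^*,I_1^*,I_2^* )$ be an endemic equilibrium of the model with all components positive. Suppose that for every $(S,V_1,I_1,I_2)$ with positive components other than $E_3$, $$F_1(S^*,I_1^* )\left(2-\tfrac{S^*}{S}-\tfrac{S\,g_1(S,I_1)}{S^*g_1(S^*,I_1^* )}\right)+F_2(S^*,I_2^* )\left(2-\tfrac{S^*}{S}-\tfrac{S\,g_2(S,I_2)}{S^*g_2(S^*,I_2^* )}\right)+rS^*\left(3-\tfrac{S^*}{S}-\tfrac{V_1}{V_1^*}-\tfrac{SV_1^*}{S^*V_1}\right)+\mu S^*\left(2-\tfrac{S^*}{S}-\tfrac{S}{S^*}\right)+I_1\left(S^*g_1(S,I_1)-\alpha_1\right)+I_2\left(S^*g_2(S,I_2)+kV_1^*-\alpha_2\right)<0.$$ Then $E_3$ is globally asymptotically stable.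
   Context: The model is $\dot S=\Lambda-F_1(S,I_1)-F_2(S,I_2)-\lambda S$, $\dot V_1=rS-(\mu+kI_2)V_1$, $\dot I_1=F_1(S,I_1)-\alpha_1I_1$, $\dot I_2=F_2(S,I_2)+kI_2V_1-\alpha_2I_2$ on $\mathbb{R}^4_+$. The constants $\Lambda,\mu,r,k,\gamma_1,\gamma_2>0$ and $v_1,v_2\ge0$; $\lambda=r+\mu$ and $\alpha_i=\gamma_i+v_i+\mu$. For $i=1,2$ the incidence functions satisfy: - (H1) $F_i(S,I_i)=I_if_i(S,I_i)$ with $F_i,f_i\in C^2(\mathbb{R}^2_+,\mathbb{R}_+)$ and $F_i(0,I_i)=F_i(S,0)=0$; - (H2) $\partial f_i/\partial S>0$ and $\partial f_i/\partial I_i\le0$; - (H3) $\lim_{I_i\to0^+}F_i(S,I_i)/I_i$ exists and is positive for $S>0$; - (H4) $f_i(S,I_i)=Sg_i(S,I_i)$ for some function $g_i$. *)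

theory Defs
  imports "HOL-Analysis.Analysis"
begin

definition Rplus2 :: "(real \<times> real) set" where
  "Rplus2 = {z. fst z \<ge> 0 \<and> snd z \<ge> 0}"

definition C1_on :: "'a::real_normed_vector set \<Rightarrow> ('a \<Rightarrow> 'b::real_normed_vector) \<Rightarrow> bool" where
  "C1_on A h \<longleftrightarrow> (\<exists>h'. (\<forall>z\<in>A. (h has_derivative blinfun_apply (h' z)) (at z within A))
                       \<and> continuous_on A h')"

definition C2_on :: "'a::real_normed_vector set \<Rightarrow> ('a \<Rightarrow> 'b::real_normed_vector) \<Rightarrow> bool" where
  "C2_on A h \<longleftrightarrow> (\<exists>h'. (\<forall>z\<in>A. (h has_derivative blinfun_apply (h' z)) (at z within A))
                       \<and> C1_on A h')"

definition incidence_hyps ::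
  "(real \<Rightarrow> real \<Rightarrow> real) \<Rightarrow> (real \<Rightarrow> real \<Rightarrow> real) \<Rightarrow> (real \<Rightarrow> real \<Rightarrow> real) \<Rightarrow> bool" where
  "incidence_hyps F f g \<longleftrightarrow>
     \<comment> \<open>(H1)\<close>
     (\<forall>S I. S \<ge> 0 \<and> I \<ge> 0 \<longrightarrow> F S I = I * f S I) \<and>
     C2_on Rplus2 (\<lambda>z. F (fst z) (snd z)) \<and> C2_on Rplus2 (\<lambda>z. f (fst z) (snd z)) \<and>
     (\<forall>S I. S \<ge> 0 \<and> I \<ge> 0 \<longrightarrow> F S I \<ge> 0 \<and> f S I \<ge> 0) \<and>
     (\<forall>I \<ge> 0. F 0 I = 0) \<and> (\<forall>S \<ge> 0. F S 0 = 0) \<and>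
     \<comment> \<open>(H2)\<close>
     (\<forall>S I. S \<ge> 0 \<and> I \<ge> 0 \<longrightarrow>
        (\<exists>D. ((\<lambda>x. f x I) has_real_derivative D) (at S within {0..}) \<and> D > 0)) \<and>
     (\<forall>S I. S \<ge> 0 \<and> I \<ge> 0 \<longrightarrow>
        (\<exists>D. ((\<lambda>y. f S y) has_real_derivative D) (at I within {0..}) \<and> D \<le> 0)) \<and>
     \<comment> \<open>(H3)\<close>
     (\<forall>S > 0. \<exists>L > 0. ((\<lambda>I. F S I / I) \<longlongrightarrow> L) (at_right 0)) \<and>
     \<comment> \<open>(H4)\<close>
     (\<forall>S I. S \<ge> 0 \<and> I \<ge> 0 \<longrightarrow> f S I = S * g S I)"

text \<open>A solution of the model on [0, infinity), staying in R^4_+.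
  Parameters: Lam = Lambda, mu, r, k, gam1, gam2, v1, v2; lambda = r + mu, alpha_i = gam_i + v_i + mu.\<close>
definition is_solution ::
  "real \<Rightarrow> real \<Rightarrow> real \<Rightarrow> real \<Rightarrow> real \<Rightarrow> real \<Rightarrow> real \<Rightarrow> real \<Rightarrow>
   (real \<Rightarrow> real \<Rightarrow> real) \<Rightarrow> (real \<Rightarrow> real \<Rightarrow> real) \<Rightarrow>
   (real \<Rightarrow> real \<times> real \<times> real \<times> real) \<Rightarrow> bool" where
  "is_solution Lam mu r k gam1 gam2 v1 v2 F1 F2 x \<longleftrightarrow>
     (\<forall>t \<ge> 0. let (S, V, I1, I2) = x t in S \<ge> 0 \<and> V \<ge> 0 \<and> I1 \<ge> 0 \<and> I2 \<ge> 0) \<and>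
     (\<forall>t \<ge> 0.
        let (S, V, I1, I2) = x t in
        ((\<lambda>s. fst (x s)) has_real_derivative
            (Lam - F1 S I1 - F2 S I2 - (r + mu) * S)) (at t within {0..}) \<and>
        ((\<lambda>s. fst (snd (x s))) has_real_derivative
            (r * S - (mu + k * I2) * V)) (at t within {0..}) \<and>
        ((\<lambda>s. fst (snd (snd (x s)))) has_real_derivative
            (F1 S I1 - (gam1 + v1 + mu) * I1)) (at t within {0..}) \<and>
        ((\<lambda>s. snd (snd (snd (x s)))) has_real_derivative
            (F2 S I2 + k * I2 * V - (gam2 + v2 + mu) * I2)) (at t within {0..}))"

definition is_equilibrium ::
  "real \<Rightarrow> real \<Rightarrow> real \<Rightarrow> real \<Rightarrow> real \<Rightarrow> real \<Rightarrow> real \<Rightarrow> real \<Rightarrow>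
   (real \<Rightarrow> real \<Rightarrow> real) \<Rightarrow> (real \<Rightarrow> real \<Rightarrow> real) \<Rightarrow>
   real \<times> real \<times> real \<times> real \<Rightarrow> bool" where
  "is_equilibrium Lam mu r k gam1 gam2 v1 v2 F1 F2 E \<longleftrightarrow>
     (let (S, V, I1, I2) = E in
        Lam - F1 S I1 - F2 S I2 - (r + mu) * S = 0 \<and>
        r * S - (mu + k * I2) * V = 0 \<and>
        F1 S I1 - (gam1 + v1 + mu) * I1 = 0 \<and>
        F2 S I2 + k * I2 * V - (gam2 + v2 + mu) * I2 = 0)"

definition pos4 :: "real \<times> real \<times> real \<times> real \<Rightarrow> bool" where
  "pos4 z \<longleftrightarrow> (let (S, V, I1, I2) = z in S > 0 \<and> V > 0 \<and> I1 > 0 \<and> I2 > 0)"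

definition globally_asymptotically_stable ::
  "real \<Rightarrow> real \<Rightarrow> real \<Rightarrow> real \<Rightarrow> real \<Rightarrow> real \<Rightarrow> real \<Rightarrow> real \<Rightarrow>
   (real \<Rightarrow> real \<Rightarrow> real) \<Rightarrow> (real \<Rightarrow> real \<Rightarrow> real) \<Rightarrow>
   real \<times> real \<times> real \<times> real \<Rightarrow> bool" where
  "globally_asymptotically_stable Lam mu r k gam1 gam2 v1 v2 F1 F2 E \<longleftrightarrow>
     (\<forall>\<epsilon> > 0. \<exists>\<delta> > 0. \<forall>x. is_solution Lam mu r k gam1 gam2 v1 v2 F1 F2 x \<and> pos4 (x 0)
          \<and> dist (x 0) E < \<delta> \<longrightarrow> (\<forall>t \<ge> 0. dist (x t) E < \<epsilon>)) \<and>
     (\<forall>x. is_solution Lam mu r k gam1 gam2 v1 v2 F1 F2 x \<and> pos4 (x 0)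
          \<longrightarrow> (x \<longlongrightarrow> E) at_top)"

end

(*
  Take the Volterra-type Lyapunov function
    L = sum over x in {S, V1, I1, I2} of  x - x' - x' ln (x / x'),
  where x' is the corresponding component of E3.
  Along solutions with positive components, the equilibrium equations turn dL/dt into
  exactly the expression assumed to be negative away from E3 (the incidence functions enter
  only through F_i = I_i S g_i). The sublevel sets of L inside the open positive orthant are
  compact, which keeps solutions in the orthant and makes L a strict Lyapunov function there:
  this gives stability, and since dL/dt is bounded away from zero on compact sets avoiding E3,
  L tends to 0, so every solution converges to E3.
*)

theory Submission
  imports Defs
begin

lemma DERIV_nonpos_within_Icc_imp_decreasing:
  fixes h :: "real \<Rightarrow> real"
  assumes "a \<le> b"
    and deriv: "\<And>t. t \<in> {a..b} \<Longrightarrow> (h has_real_derivative h' t) (at t within {a..b})"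
    and nonpos: "\<And>t. t \<in> {a..b} \<Longrightarrow> h' t \<le> 0"
  shows "h b \<le> h a"
proof (rule DERIV_nonpos_imp_decreasing_open[OF \<open>a \<le> b\<close>])
  show "continuous_on {a..b} h"
    using deriv by (rule DERIV_continuous_on)
  fix t assume "a < t" "t < b"
  then show "\<exists>y. (h has_real_derivative y) (at t) \<and> y \<le> 0"
    using deriv[of t] nonpos[of t] at_within_Icc_at[of a t b] by auto
qed

lemma DERIV_pos_within_Icc_imp_increasing:
  fixes h :: "real \<Rightarrow> real"
  assumes "a < b"
    and deriv: "\<And>t. t \<in> {a..b} \<Longrightarrow> \<exists>y. (h has_real_derivative y) (at t within {a..b}) \<and> y > 0"
  shows "h a < h b"
proof (rule DERIV_pos_imp_increasing_open[OF \<open>a < b\<close>])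
  obtain h' where "\<And>t. t \<in> {a..b} \<Longrightarrow> (h has_real_derivative h' t) (at t within {a..b})"
    using deriv by metis
  then show "continuous_on {a..b} h"
    by (rule DERIV_continuous_on)
  fix t assume "a < t" "t < b"
  then show "\<exists>y. (h has_real_derivative y) (at t) \<and> y > 0"
    using deriv[of t] at_within_Icc_at[of a t b] by auto
qed

lemma compact_Int_vimage_closed:
  fixes K :: "'a::t2_space set"
  assumes "compact K" "continuous_on K f" "closed T"
  shows "compact (K \<inter> f -` T)"
proof -
  have "closed (K \<inter> f -` T)"
    using continuous_closed_preimage[OF assms(2) compact_imp_closed[OF assms(1)] assms(3)] .
  from compact_Int_closed[OF assms(1) this] show ?thesis
    by (simp only: Int_assoc[symmetric] Int_absorb)
qed

lemma first_exit_time: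
  fixes x :: "real \<Rightarrow> 'a::topological_space"
  assumes "continuous_on {0..t1} x" "open U" "x 0 \<in> U" "t1 \<ge> 0" "x t1 \<notin> U"
  obtains T where "0 < T" "T \<le> t1" "x T \<notin> U" "\<And>s. s \<in> {0..<T} \<Longrightarrow> x s \<in> U"
proof -
  define A where "A = {0..t1} \<inter> x -` (- U)"
  have "closed A"
    unfolding A_def using assms(1,2) by (intro continuous_closed_preimage) auto
  moreover have "t1 \<in> A" "bdd_below A"
    using assms(4,5) by (auto simp: A_def)
  ultimately have "Inf A \<in> A"
    using closed_contains_Inf by blast
  then have T: "0 \<le> Inf A" "Inf A \<le> t1" "x (Inf A) \<notin> U"
    by (auto simp: A_def)
  moreover have "Inf A \<noteq> 0"
    using T(3) assms(3) by auto
  ultimately have "0 < Inf A"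
    by simp
  have "x s \<in> U" if "s \<in> {0..<Inf A}" for s
  proof (rule ccontr)
    assume "x s \<notin> U"
    then have "s \<in> A"
      using that T(2) by (auto simp: A_def)
    then show False
      using cInf_lower[OF _ \<open>bdd_below A\<close>] that by fastforce
  qed
  then show thesis
    using that T \<open>0 < Inf A\<close> by blast
qed

section \<open>Strict Lyapunov functions\<close>

locale strict_lyapunov_function =
  fixes U :: "'a::metric_space set" and E :: 'a and L D :: "'a \<Rightarrow> real"
  assumes open_domain: "open U"
    and equilibrium_in_domain: "E \<in> U"
    and continuous_L: "continuous_on U L"
    and continuous_D: "continuous_on U D"
    and L_equilibrium: "L E = 0"
    and L_pos: "\<And>z. z \<in> U \<Longrightarrow> z \<noteq> E \<Longrightarrow> L z > 0"
    and D_nonpos: "\<And>z. z \<in> U \<Longrightarrow> D z \<le> 0"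
    and D_neg: "\<And>z. z \<in> U \<Longrightarrow> z \<noteq> E \<Longrightarrow> D z < 0"
    and compact_sublevel: "\<And>C. compact {z \<in> U. L z \<le> C}"
begin

definition trajectory :: "(real \<Rightarrow> 'a) \<Rightarrow> bool" where
  "trajectory x \<longleftrightarrow> continuous_on {0..} x \<and> x 0 \<in> U \<and>
     (\<forall>t \<ge> 0. x t \<in> U \<longrightarrow> ((\<lambda>s. L (x s)) has_real_derivative D (x t)) (at t within {0..}))"

lemma L_nonneg: "z \<in> U \<Longrightarrow> L z \<ge> 0"
  using L_pos[of z] L_equilibrium by (cases "z = E") auto

lemma trajectory_L_decreasing_in_domain:
  assumes traj: "trajectory x" and "0 \<le> a" "a \<le> b" and inside: "\<And>t. t \<in> {a..b} \<Longrightarrow> x t \<in> U"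
  shows "L (x b) \<le> L (x a)"
proof (rule DERIV_nonpos_within_Icc_imp_decreasing[where h' = "\<lambda>t. D (x t)", OF \<open>a \<le> b\<close>])
  fix t assume t: "t \<in> {a..b}"
  then have "((\<lambda>s. L (x s)) has_real_derivative D (x t)) (at t within {0..})"
    using traj inside \<open>0 \<le> a\<close> unfolding trajectory_def by auto
  then show "((\<lambda>s. L (x s)) has_real_derivative D (x t)) (at t within {a..b})"
    by (rule DERIV_subset) (use \<open>0 \<le> a\<close> in auto)
  show "D (x t) \<le> 0"
    using D_nonpos inside t by blast
qed

text \<open>A trajectory cannot leave \<open>U\<close>: up to the first exit time it stays in the compact sublevel set
  of \<open>L (x 0)\<close>, which is closed and contained in \<open>U\<close>.\<close>

lemma trajectory_in_domain:
  assumes traj: "trajectory x" and "t1 \<ge> 0"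
  shows "x t1 \<in> U"
proof (rule ccontr)
  have cont: "continuous_on {0..b} x" for b
    using traj unfolding trajectory_def by (auto intro: continuous_on_subset)
  assume "x t1 \<notin> U"
  moreover have "x 0 \<in> U"
    using traj by (simp add: trajectory_def)
  ultimately obtain T where T: "0 < T" "x T \<notin> U" and before: "\<And>s. s \<in> {0..<T} \<Longrightarrow> x s \<in> U"
    using first_exit_time[OF cont open_domain _ \<open>t1 \<ge> 0\<close>] by blast
  define K where "K = {z \<in> U. L z \<le> L (x 0)}"
  have "x ` {0..<T} \<subseteq> K"
  proof
    fix z assume "z \<in> x ` {0..<T}"
    then obtain s where s: "s \<in> {0..<T}" "z = x s" by blast
    have "L (x s) \<le> L (x 0)"
      using s before by (intro trajectory_L_decreasing_in_domain[OF traj]) auto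
    then show "z \<in> K"
      using s before by (simp add: K_def)
  qed
  moreover have "closed K"
    unfolding K_def by (rule compact_imp_closed[OF compact_sublevel])
  moreover have "closure {0..<T} = {0..T}"
    using \<open>0 < T\<close> by simp
  ultimately have "x ` {0..T} \<subseteq> K"
    using image_closure_subset[of "{0..<T}" x K] cont by simp
  then have "x T \<in> K"
    using \<open>0 < T\<close> by auto
  then show False
    using T by (simp add: K_def)
qed

lemma trajectory_L_decreasing:
  assumes "trajectory x" "0 \<le> a" "a \<le> b"
  shows "L (x b) \<le> L (x a)"
  using assms trajectory_L_decreasing_in_domain trajectory_in_domain by simp

lemma L_small_imp_near:
  assumes "e > 0"
  shows "\<exists>c>0. \<forall>z\<in>U. L z < c \<longrightarrow> dist z E < e"
proof -
  define K where "K = {z \<in> U. L z \<le> 1} \<inter> - ball E e"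
  have "compact K"
    unfolding K_def by (intro compact_Int_closed compact_sublevel) auto
  show ?thesis
  proof (cases "K = {}")
    case True
    then show ?thesis
      by (intro exI[of _ 1]) (auto simp: K_def dist_commute)
  next
    case False
    then obtain z0 where z0: "z0 \<in> K" "\<And>z. z \<in> K \<Longrightarrow> L z0 \<le> L z"
      using continuous_attains_inf[OF \<open>compact K\<close>] continuous_L
      by (metis (no_types, lifting) Int_iff K_def continuous_on_subset mem_Collect_eq subsetI)
    have "L z0 > 0"
      using z0(1) \<open>e > 0\<close> by (intro L_pos) (auto simp: K_def)
    then show ?thesis
      using z0 by (intro exI[of _ "min 1 (L z0)"]) (force simp: K_def dist_commute)
  qed
qed

lemma near_imp_L_small:
  assumes "c > 0"
  shows "\<exists>d>0. \<forall>z. dist z E < d \<longrightarrow> L z < c"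
proof -
  have "open (U \<inter> L -` {..<c})"
    using continuous_L open_domain by (intro continuous_open_preimage) auto
  moreover have "E \<in> U \<inter> L -` {..<c}"
    using equilibrium_in_domain L_equilibrium assms by simp
  ultimately obtain d where d: "d > 0" "ball E d \<subseteq> U \<inter> L -` {..<c}"
    by (meson open_contains_ball)
  have "L z < c" if "dist z E < d" for z
    using d(2) that by (metis IntD2 dist_commute lessThan_iff mem_ball subsetD vimageE)
  then show ?thesis
    using d(1) by blast
qed

lemma trajectory_stable:
  assumes "e > 0"
  shows "\<exists>d>0. \<forall>x. trajectory x \<and> dist (x 0) E < d \<longrightarrow> (\<forall>t\<ge>0. dist (x t) E < e)"
proof -
  obtain c where c: "c > 0" "\<And>z. z \<in> U \<Longrightarrow> L z < c \<Longrightarrow> dist z E < e"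
    using L_small_imp_near[OF assms] by blast
  obtain d where d: "d > 0" "\<And>z. dist z E < d \<Longrightarrow> L z < c"
    using near_imp_L_small[OF c(1)] by blast
  have "dist (x t) E < e" if "trajectory x" "dist (x 0) E < d" "t \<ge> 0" for x t
  proof -
    have "L (x t) \<le> L (x 0)"
      using trajectory_L_decreasing that by simp
    also have "\<dots> < c"
      using d that by blast
    finally show ?thesis
      using c(2) trajectory_in_domain that by blast
  qed
  then show ?thesis
    using d(1) by blast
qed

text \<open>On the compact set \<open>{c \<le> L \<le> C}\<close>, which avoids \<open>E\<close>, the continuous \<open>D\<close> attains a negative maximum.\<close>

lemma D_uniformly_negative:
  assumes "c > 0"
  shows "\<exists>m>0. \<forall>z\<in>U. c \<le> L z \<and> L z \<le> C \<longrightarrow> D z \<le> - m"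
proof (cases "{z \<in> U. L z \<le> C} \<inter> L -` {c..} = {}")
  case True
  then show ?thesis
    by (intro exI[of _ 1]) auto
next
  case False
  define K where "K = {z \<in> U. L z \<le> C} \<inter> L -` {c..}"
  have "compact K"
    unfolding K_def using compact_sublevel continuous_L
    by (intro compact_Int_vimage_closed) (auto intro: continuous_on_subset)
  moreover have "continuous_on K D"
    using continuous_D by (rule continuous_on_subset) (auto simp: K_def)
  ultimately obtain z0 where z0: "z0 \<in> K" "\<And>z. z \<in> K \<Longrightarrow> D z \<le> D z0"
    using continuous_attains_sup[of K D] False unfolding K_def by blast
  have "z0 \<noteq> E"
    using z0(1) \<open>c > 0\<close> L_equilibrium by (auto simp: K_def)
  then have "D z0 < 0"
    using z0(1) D_neg by (simp add: K_def)
  then show ?thesis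
    using z0(2) by (intro exI[of _ "- D z0"]) (auto simp: K_def)
qed

text \<open>If \<open>L\<close> stayed above \<open>c\<close> along \<open>x\<close>, then \<open>D \<le> -m\<close> there and \<open>L\<close> would decrease at least linearly.\<close>

lemma trajectory_L_eventually_small:
  assumes traj: "trajectory x" and "c > 0"
  shows "\<exists>t\<ge>0. L (x t) < c"
proof (rule ccontr)
  assume "\<not> ?thesis"
  then have above: "c \<le> L (x t)" if "t \<ge> 0" for t
    using that by (meson not_le)
  define C where "C = L (x 0)"
  obtain m where "m > 0" and m: "\<And>z. z \<in> U \<Longrightarrow> c \<le> L z \<Longrightarrow> L z \<le> C \<Longrightarrow> D z \<le> - m"
    using D_uniformly_negative[OF \<open>c > 0\<close>, of C] by blast
  define T where "T = C / m + 1"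
  have "T \<ge> 0"
    using \<open>m > 0\<close> L_nonneg[of "x 0"] traj by (simp add: T_def C_def trajectory_def)
  have "L (x T) + m * T \<le> L (x 0) + m * 0"
  proof (rule DERIV_nonpos_within_Icc_imp_decreasing
      [where h = "\<lambda>s. L (x s) + m * s" and h' = "\<lambda>t. D (x t) + m", OF \<open>T \<ge> 0\<close>])
    fix t assume "t \<in> {0..T}"
    then have "t \<ge> 0"
      by simp
    then have "((\<lambda>s. L (x s)) has_real_derivative D (x t)) (at t within {0..})"
      using traj trajectory_in_domain[OF traj] unfolding trajectory_def by blast
    then show "((\<lambda>s. L (x s) + m * s) has_real_derivative D (x t) + m) (at t within {0..T})"
      by (auto intro!: derivative_eq_intros intro: DERIV_subset)
    show "D (x t) + m \<le> 0"
      using m[OF trajectory_in_domain[OF traj \<open>t \<ge> 0\<close>] above[OF \<open>t \<ge> 0\<close>]]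
        trajectory_L_decreasing[OF traj order_refl \<open>t \<ge> 0\<close>]
      by (simp add: C_def)
  qed
  moreover have "m * T = C + m"
    using \<open>m > 0\<close> by (simp add: T_def field_simps)
  ultimately have "L (x T) \<le> - m"
    by (simp add: C_def)
  then show False
    using above[OF \<open>T \<ge> 0\<close>] \<open>c > 0\<close> \<open>m > 0\<close> by simp
qed

lemma trajectory_tendsto:
  assumes traj: "trajectory x"
  shows "(x \<longlongrightarrow> E) at_top"
  unfolding tendsto_iff
proof (intro allI impI)
  fix e :: real assume "e > 0"
  obtain c where c: "c > 0" "\<And>z. z \<in> U \<Longrightarrow> L z < c \<Longrightarrow> dist z E < e"
    using L_small_imp_near[OF \<open>e > 0\<close>] by blast
  obtain t0 where t0: "t0 \<ge> 0" "L (x t0) < c"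
    using trajectory_L_eventually_small[OF traj c(1)] by blast
  have "dist (x t) E < e" if "t \<ge> t0" for t
    using c(2) trajectory_in_domain[OF traj] trajectory_L_decreasing[OF traj t0(1) that] t0 that
    by fastforce
  then show "\<forall>\<^sub>F t in at_top. dist (x t) E < e"
    unfolding eventually_at_top_linorder by blast
qed

end

section \<open>The Volterra function on the positive orthant\<close>

definition volterra :: "real \<Rightarrow> real \<Rightarrow> real" where
  "volterra a v = v - a - a * ln (v / a)"

lemma volterra_self [simp]: "a > 0 \<Longrightarrow> volterra a a = 0"
  by (simp add: volterra_def)

lemma volterra_nonneg:
  assumes "a > 0" "v > 0"
  shows "volterra a v \<ge> 0"
proof -
  have "a * ln (v / a) \<le> a * (v / a - 1)"
    using assms by (intro mult_left_mono ln_le_minus_one) auto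
  also have "\<dots> = v - a"
    using assms by (simp add: field_simps)
  finally show ?thesis
    by (simp add: volterra_def)
qed

lemma volterra_pos:
  assumes "a > 0" "v > 0" "v \<noteq> a"
  shows "volterra a v > 0"
proof -
  have "v / a > 0" "v / a \<noteq> 1"
    using assms by auto
  then have "ln (v / a) < v / a - 1"
    using ln_le_minus_one[of "v / a"] ln_eq_minus_one[of "v / a"] by fastforce
  then have "a * ln (v / a) < a * (v / a - 1)"
    using assms by (intro mult_strict_left_mono) auto
  also have "\<dots> = v - a"
    using assms by (simp add: field_simps)
  finally show ?thesis
    by (simp add: volterra_def)
qed

lemma volterra_sublevel_bounds:
  assumes "a > 0" "v > 0" "volterra a v \<le> C"
  shows "a * exp (- (C + a) / a) \<le> v" and "v \<le> 2 * (C + a)"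
proof -
  have "- (C + a) / a \<le> ln (v / a)"
    using assms by (simp add: volterra_def field_simps)
  then have "exp (- (C + a) / a) \<le> v / a"
    using assms by (metis divide_pos_pos exp_le_cancel_iff exp_ln)
  then show "a * exp (- (C + a) / a) \<le> v"
    using assms by (simp add: field_simps)
  have "ln (v / a) = ln 2 + ln (v / a / 2)"
    using assms ln_mult[of 2 "v / a / 2"] by simp
  also have "\<dots> \<le> 1 + (v / a / 2 - 1)"
    using assms ln_le_minus_one[of 2] ln_le_minus_one[of "v / a / 2"]
    by (intro add_mono) auto
  finally have "ln (v / a) \<le> v / a / 2"
    by simp
  then have "a * ln (v / a) \<le> v / 2"
    using assms mult_left_mono[of "ln (v / a)" "v / a / 2" a] by simp
  then show "v \<le> 2 * (C + a)"
    using assms by (simp add: volterra_def)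
qed

lemma volterra_has_derivative:
  assumes "(u has_real_derivative u') (at t within T)" "u t = v" "v > 0" "a > 0"
  shows "((\<lambda>s. volterra a (u s)) has_real_derivative (1 - a / v) * u') (at t within T)"
  unfolding volterra_def using assms
  by (auto intro!: derivative_eq_intros simp: field_simps)

definition positive_orthant :: "(real \<times> real \<times> real \<times> real) set" where
  "positive_orthant = {0<..} \<times> {0<..} \<times> {0<..} \<times> {0<..}"

lemma pos4_iff_positive_orthant: "pos4 z \<longleftrightarrow> z \<in> positive_orthant"
  by (cases z) (simp add: pos4_def positive_orthant_def)

fun volterra4 :: "real \<times> real \<times> real \<times> real \<Rightarrow> real \<times> real \<times> real \<times> real \<Rightarrow> real" where
  "volterra4 (a, b, c, d) (S, V, I1, I2) = volterra a S + volterra b V + volterra c I1 + volterra d I2"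

lemma continuous_on_volterra4:
  assumes "a > 0" "b > 0" "c > 0" "d > 0"
  shows "continuous_on positive_orthant (volterra4 (a, b, c, d))"
proof -
  have eq: "volterra4 (a, b, c, d) = (\<lambda>z. volterra a (fst z) + volterra b (fst (snd z))
      + volterra c (fst (snd (snd z))) + volterra d (snd (snd (snd z))))"
    by (rule ext) (metis volterra4.simps prod.collapse)
  have comp_pos: "fst z > 0 \<and> fst (snd z) > 0 \<and> fst (snd (snd z)) > 0 \<and> snd (snd (snd z)) > 0"
    if "z \<in> positive_orthant" for z
    using that by (auto simp: positive_orthant_def mem_Times_iff)
  show ?thesis
    unfolding eq volterra_def by (intro continuous_intros) (use assms in \<open>auto dest!: comp_pos\<close>)
qed

lemma compact_sublevel_volterra4:
  assumes pos: "a > 0" "b > 0" "c > 0" "d > 0"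
  shows "compact {z \<in> positive_orthant. volterra4 (a, b, c, d) z \<le> C}"
proof -
  define lo where "lo x = x * exp (- (C + x) / x)" for x :: real
  define B where "B = {lo a..2 * (C + a)} \<times> {lo b..2 * (C + b)} \<times> {lo c..2 * (C + c)} \<times> {lo d..2 * (C + d)}"
  have bound: "v \<in> {lo x..2 * (C + x)}" if "x > 0" "v > 0" "volterra x v \<le> C" for x v
    using volterra_sublevel_bounds[OF that] by (simp add: lo_def)
  have "{lo x..2 * (C + x)} \<subseteq> {0<..}" if "x > 0" for x
    using that by (auto simp: lo_def intro: less_le_trans[of 0 "x * exp (- (C + x) / x)"])
  then have "B \<subseteq> positive_orthant"
    unfolding B_def positive_orthant_def using pos by (intro Sigma_mono) auto
  moreover have "volterra4 (a, b, c, d) z \<le> C \<Longrightarrow> z \<in> positive_orthant \<Longrightarrow> z \<in> B" for z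
  proof (cases z)
    case (fields S V I1 I2)
    assume le: "volterra4 (a, b, c, d) z \<le> C" and "z \<in> positive_orthant"
    then have zpos: "S > 0" "V > 0" "I1 > 0" "I2 > 0"
      by (simp_all add: fields positive_orthant_def)
    have "volterra a S \<ge> 0" "volterra b V \<ge> 0" "volterra c I1 \<ge> 0" "volterra d I2 \<ge> 0"
      using zpos pos by (simp_all add: volterra_nonneg)
    moreover have "volterra a S + volterra b V + volterra c I1 + volterra d I2 \<le> C"
      using le by (simp add: fields)
    ultimately have "volterra a S \<le> C" "volterra b V \<le> C" "volterra c I1 \<le> C" "volterra d I2 \<le> C"
      by linarith+
    then show "z \<in> B"
      unfolding B_def fields using bound pos zpos by simp
  qed
  ultimately have eq: "{z \<in> positive_orthant. volterra4 (a, b, c, d) z \<le> C} = B \<inter> volterra4 (a, b, c, d) -` {..C}"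
    by auto
  have "continuous_on B (volterra4 (a, b, c, d))"
    using continuous_on_volterra4 pos \<open>B \<subseteq> positive_orthant\<close> by (blast intro: continuous_on_subset)
  moreover have "compact B"
    unfolding B_def by (intro compact_Times compact_Icc)
  ultimately show ?thesis
    unfolding eq by (intro compact_Int_vimage_closed) auto
qed

lemma strict_lyapunov_function_volterra4:
  assumes E: "(a, b, c, d) \<in> positive_orthant"
    and continuous_D: "continuous_on positive_orthant D"
    and D_nonpos: "\<And>z. z \<in> positive_orthant \<Longrightarrow> D z \<le> 0"
    and D_neg: "\<And>z. z \<in> positive_orthant \<Longrightarrow> z \<noteq> (a, b, c, d) \<Longrightarrow> D z < 0"
  shows "strict_lyapunov_function positive_orthant (a, b, c, d) (volterra4 (a, b, c, d)) D"
proof unfold_locales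
  have pos: "a > 0" "b > 0" "c > 0" "d > 0"
    using E by (simp_all add: positive_orthant_def)
  show "open positive_orthant"
    unfolding positive_orthant_def by (intro open_Times open_greaterThan)
  show "continuous_on positive_orthant (volterra4 (a, b, c, d))"
    using pos by (rule continuous_on_volterra4)
  show "volterra4 (a, b, c, d) (a, b, c, d) = 0"
    using pos by simp
  show "compact {z \<in> positive_orthant. volterra4 (a, b, c, d) z \<le> C}" for C
    using pos by (rule compact_sublevel_volterra4)
  show "volterra4 (a, b, c, d) z > 0" if "z \<in> positive_orthant" "z \<noteq> (a, b, c, d)" for z
  proof (cases z)
    case (fields S V I1 I2)
    then have zpos: "S > 0" "V > 0" "I1 > 0" "I2 > 0"
      using that(1) by (simp_all add: positive_orthant_def)
    have "volterra a S \<ge> 0" "volterra b V \<ge> 0" "volterra c I1 \<ge> 0" "volterra d I2 \<ge> 0"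
      using zpos pos by (simp_all add: volterra_nonneg)
    moreover have "volterra a S > 0 \<or> volterra b V > 0 \<or> volterra c I1 > 0 \<or> volterra d I2 > 0"
      using that(2) zpos pos volterra_pos[of a S] volterra_pos[of b V] volterra_pos[of c I1] volterra_pos[of d I2]
      by (auto simp: fields)
    ultimately show ?thesis
      by (auto simp: fields)
  qed
qed (use E continuous_D D_nonpos D_neg in auto)

section \<open>The two-strain model\<close>

lemma C2_on_imp_continuous_on: "C2_on A h \<Longrightarrow> continuous_on A h"
  unfolding C2_on_def continuous_on_eq_continuous_within
  using has_derivative_continuous by blast

lemma incidence_hypsD:
  assumes "incidence_hyps F f g"
  shows incidence_factor: "\<And>S I. S \<ge> 0 \<Longrightarrow> I \<ge> 0 \<Longrightarrow> F S I = I * f S I"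
    and incidence_C2: "C2_on Rplus2 (\<lambda>z. f (fst z) (snd z))"
    and incidence_increasing: "\<And>S I. S \<ge> 0 \<Longrightarrow> I \<ge> 0 \<Longrightarrow>
          \<exists>D. ((\<lambda>x. f x I) has_real_derivative D) (at S within {0..}) \<and> D > 0"
    and incidence_factor_S: "\<And>S I. S \<ge> 0 \<Longrightarrow> I \<ge> 0 \<Longrightarrow> f S I = S * g S I"
  using assms unfolding incidence_hyps_def by simp_all

lemma incidence_pos:
  assumes hyps: "incidence_hyps F f g" and "S > 0" "I \<ge> 0"
  shows "f S I > 0"
proof -
  have "f 0 I < f S I"
  proof (rule DERIV_pos_within_Icc_imp_increasing[OF \<open>S > 0\<close>])
    fix t :: real assume "t \<in> {0..S}"
    then obtain D where "((\<lambda>x. f x I) has_real_derivative D) (at t within {0..})" "D > 0"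
      using incidence_increasing[OF hyps, of t I] \<open>I \<ge> 0\<close> by auto
    then show "\<exists>D. ((\<lambda>x. f x I) has_real_derivative D) (at t within {0..S}) \<and> D > 0"
      using DERIV_subset[of _ D t "{0..}" "{0..S}"] by auto
  qed
  moreover have "f 0 I = 0"
    using incidence_factor_S[OF hyps order_refl \<open>I \<ge> 0\<close>] by simp
  ultimately show ?thesis by simp
qed

text \<open>The derivative of \<open>volterra4 (S\<^sup>*, V\<^sub>1\<^sup>*, I\<^sub>1\<^sup>*, I\<^sub>2\<^sup>*)\<close> along the vector field of the model,
  rewritten with the equilibrium equations; here \<open>F\<^sub>i = I\<^sub>i S G\<^sub>i\<close> with \<open>G\<^sub>i = g\<^sub>i(S, I\<^sub>i)\<close>.\<close>

lemma two_strain_lyapunov_identity: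
  fixes S V I1 I2 Ss Vs I1s I2s G1 G2 g1s g2s Lam r mu k a1 a2 F1 F2 F1s F2s :: real
  assumes pos: "S > 0" "V > 0" "I1 > 0" "I2 > 0" "Ss > 0" "Vs > 0" "I1s > 0" "I2s > 0"
    and g: "g1s \<noteq> 0" "g2s \<noteq> 0"
    and F: "F1 = I1 * S * G1" "F2 = I2 * S * G2" "F1s = I1s * Ss * g1s" "F2s = I2s * Ss * g2s"
    and eq_S: "Lam - F1s - F2s - (r + mu) * Ss = 0"
    and eq_V: "r * Ss - (mu + k * I2s) * Vs = 0"
    and eq_I1: "F1s - a1 * I1s = 0"
    and eq_I2: "F2s + k * I2s * Vs - a2 * I2s = 0"
  shows "(1 - Ss / S) * (Lam - F1 - F2 - (r + mu) * S) + (1 - Vs / V) * (r * S - (mu + k * I2) * V)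
        + (1 - I1s / I1) * (F1 - a1 * I1) + (1 - I2s / I2) * (F2 + k * I2 * V - a2 * I2)
      = F1s * (2 - Ss / S - S * G1 / (Ss * g1s))
         + F2s * (2 - Ss / S - S * G2 / (Ss * g2s))
         + r * Ss * (3 - Ss / S - V / Vs - S * Vs / (Ss * V))
         + mu * Ss * (2 - Ss / S - S / Ss)
         + I1 * (Ss * G1 - a1)
         + I2 * (Ss * G2 + k * Vs - a2)"
proof -
  have "I1s * (Ss * g1s) = I1s * a1"
    using eq_I1 F by (simp add: algebra_simps)
  then have a1: "a1 = Ss * g1s"
    using pos by simp
  have "I2s * (Ss * g2s + k * Vs) = I2s * a2"
    using eq_I2 F by (simp add: algebra_simps)
  then have a2: "a2 = Ss * g2s + k * Vs"
    using pos by simp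
  have r: "r = (mu + k * I2s) * Vs / Ss"
    using eq_V pos by (simp add: field_simps)
  have Lam: "Lam = I1s * Ss * g1s + I2s * Ss * g2s + (r + mu) * Ss"
    using eq_S F by simp
  show ?thesis
    unfolding a1 a2 Lam F unfolding r using pos g by (simp add: field_simps)
qed

lemma is_solutionD:
  assumes "is_solution Lam mu r k gam1 gam2 v1 v2 F1 F2 x" "t \<ge> 0" "x t = (S, V, I1, I2)"
  shows "((\<lambda>s. fst (x s)) has_real_derivative
            Lam - F1 S I1 - F2 S I2 - (r + mu) * S) (at t within {0..})"
    and "((\<lambda>s. fst (snd (x s))) has_real_derivative
            r * S - (mu + k * I2) * V) (at t within {0..})"
    and "((\<lambda>s. fst (snd (snd (x s)))) has_real_derivative
            F1 S I1 - (gam1 + v1 + mu) * I1) (at t within {0..})"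
    and "((\<lambda>s. snd (snd (snd (x s)))) has_real_derivative
            F2 S I2 + k * I2 * V - (gam2 + v2 + mu) * I2) (at t within {0..})"
  using conjunct2[OF assms(1)[unfolded is_solution_def], rule_format, OF assms(2)]
  by (simp_all add: assms(3))

lemma is_solution_continuous:
  assumes sol: "is_solution Lam mu r k gam1 gam2 v1 v2 F1 F2 x"
  shows "continuous_on {0..} x"
  unfolding continuous_on_eq_continuous_within
proof
  fix t :: real assume "t \<in> {0..}"
  obtain S V I1 I2 where xt: "x t = (S, V, I1, I2)"
    by (cases "x t")
  note deriv = is_solutionD[OF sol _ xt]
  have "continuous (at t within {0..})
      (\<lambda>s. (fst (x s), fst (snd (x s)), fst (snd (snd (x s))), snd (snd (snd (x s)))))"
    using \<open>t \<in> {0..}\<close> DERIV_continuous[OF deriv(1)] DERIV_continuous[OF deriv(2)]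
      DERIV_continuous[OF deriv(3)] DERIV_continuous[OF deriv(4)]
    by (intro continuous_Pair) auto
  then show "continuous (at t within {0..}) x"
    by simp
qed

locale two_strain_model =
  fixes Lam mu r k gam1 gam2 v1 v2 :: real
    and F1 F2 f1 f2 g1 g2 :: "real \<Rightarrow> real \<Rightarrow> real"
    and Ss Vs I1s I2s :: real
  assumes incidence1: "incidence_hyps F1 f1 g1"
    and incidence2: "incidence_hyps F2 f2 g2"
    and equilibrium: "is_equilibrium Lam mu r k gam1 gam2 v1 v2 F1 F2 (Ss, Vs, I1s, I2s)"
    and equilibrium_pos: "Ss > 0" "Vs > 0" "I1s > 0" "I2s > 0"
begin

abbreviation E3 :: "real \<times> real \<times> real \<times> real" where
  "E3 \<equiv> (Ss, Vs, I1s, I2s)"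

definition lyapunov_derivative :: "real \<times> real \<times> real \<times> real \<Rightarrow> real" where
  "lyapunov_derivative = (\<lambda>(S, V, I1, I2).
       F1 Ss I1s * (2 - Ss / S - S * g1 S I1 / (Ss * g1 Ss I1s))
     + F2 Ss I2s * (2 - Ss / S - S * g2 S I2 / (Ss * g2 Ss I2s))
     + r * Ss * (3 - Ss / S - V / Vs - S * Vs / (Ss * V))
     + mu * Ss * (2 - Ss / S - S / Ss)
     + I1 * (Ss * g1 S I1 - (gam1 + v1 + mu))
     + I2 * (Ss * g2 S I2 + k * Vs - (gam2 + v2 + mu)))"

lemma equilibrium_g_pos: "g1 Ss I1s > 0" "g2 Ss I2s > 0"
  using incidence_pos[OF incidence1, of Ss I1s] incidence_factor_S[OF incidence1, of Ss I1s]
    incidence_pos[OF incidence2, of Ss I2s] incidence_factor_S[OF incidence2, of Ss I2s]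
    equilibrium_pos
  by (simp_all add: zero_less_mult_iff)

lemma lyapunov_derivative_eq:
  assumes pos: "S > 0" "V > 0" "I1 > 0" "I2 > 0"
  shows "lyapunov_derivative (S, V, I1, I2) =
      (1 - Ss / S) * (Lam - F1 S I1 - F2 S I2 - (r + mu) * S)
    + (1 - Vs / V) * (r * S - (mu + k * I2) * V)
    + (1 - I1s / I1) * (F1 S I1 - (gam1 + v1 + mu) * I1)
    + (1 - I2s / I2) * (F2 S I2 + k * I2 * V - (gam2 + v2 + mu) * I2)"
proof -
  have F: "F1 S I1 = I1 * S * g1 S I1" "F2 S I2 = I2 * S * g2 S I2"
      "F1 Ss I1s = I1s * Ss * g1 Ss I1s" "F2 Ss I2s = I2s * Ss * g2 Ss I2s"
    using pos equilibrium_pos incidence_factor[OF incidence1] incidence_factor_S[OF incidence1]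
      incidence_factor[OF incidence2] incidence_factor_S[OF incidence2]
    by simp_all
  show ?thesis
    unfolding lyapunov_derivative_def
    using two_strain_lyapunov_identity[OF pos equilibrium_pos _ _ F] equilibrium
      equilibrium_g_pos
    by (simp add: is_equilibrium_def)
qed

lemma lyapunov_derivative_E3: "lyapunov_derivative E3 = 0"
  using lyapunov_derivative_eq[OF equilibrium_pos] equilibrium_pos by simp

text \<open>By (H4), \<open>g\<^sub>i(S, I\<^sub>i) = f\<^sub>i(S, I\<^sub>i) / S\<close> for \<open>S > 0\<close>, and the \<open>f\<^sub>i\<close> are continuous.\<close>

lemma continuous_on_lyapunov_derivative: "continuous_on positive_orthant lyapunov_derivative"
proof -
  have comp_pos: "fst z > 0 \<and> fst (snd z) > 0 \<and> fst (snd (snd z)) > 0 \<and> snd (snd (snd z)) > 0"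
    if "z \<in> positive_orthant" for z
    using that by (auto simp: positive_orthant_def mem_Times_iff)
  have "continuous_on positive_orthant (\<lambda>z. (\<lambda>w. f1 (fst w) (snd w)) (fst z, fst (snd (snd z))))"
    by (rule continuous_on_compose2[OF C2_on_imp_continuous_on[OF incidence_C2[OF incidence1]]])
      (auto intro!: continuous_intros dest!: comp_pos simp: Rplus2_def)
  then have f1: "continuous_on positive_orthant (\<lambda>z. f1 (fst z) (fst (snd (snd z))))"
    by simp
  have "continuous_on positive_orthant (\<lambda>z. (\<lambda>w. f2 (fst w) (snd w)) (fst z, snd (snd (snd z))))"
    by (rule continuous_on_compose2[OF C2_on_imp_continuous_on[OF incidence_C2[OF incidence2]]])
      (auto intro!: continuous_intros dest!: comp_pos simp: Rplus2_def)
  then have f2: "continuous_on positive_orthant (\<lambda>z. f2 (fst z) (snd (snd (snd z))))"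
    by simp
  have "continuous_on positive_orthant (\<lambda>z.
       F1 Ss I1s * (2 - Ss / fst z - fst z * (f1 (fst z) (fst (snd (snd z))) / fst z) / (Ss * g1 Ss I1s))
     + F2 Ss I2s * (2 - Ss / fst z - fst z * (f2 (fst z) (snd (snd (snd z))) / fst z) / (Ss * g2 Ss I2s))
     + r * Ss * (3 - Ss / fst z - fst (snd z) / Vs - fst z * Vs / (Ss * fst (snd z)))
     + mu * Ss * (2 - Ss / fst z - fst z / Ss)
     + fst (snd (snd z)) * (Ss * (f1 (fst z) (fst (snd (snd z))) / fst z) - (gam1 + v1 + mu))
     + snd (snd (snd z)) * (Ss * (f2 (fst z) (snd (snd (snd z))) / fst z) + k * Vs - (gam2 + v2 + mu)))"
    (is "continuous_on _ ?f")
    using f1 f2 equilibrium_pos equilibrium_g_pos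
    by (intro continuous_intros) (auto dest!: comp_pos)
  then show ?thesis
  proof (rule continuous_on_eq)
    fix z assume "z \<in> positive_orthant"
    then show "?f z = lyapunov_derivative z"
      using incidence_factor_S[OF incidence1] incidence_factor_S[OF incidence2]
      by (cases z) (auto simp: lyapunov_derivative_def positive_orthant_def)
  qed
qed

lemma solution_lyapunov_derivative:
  assumes sol: "is_solution Lam mu r k gam1 gam2 v1 v2 F1 F2 x"
    and "t \<ge> 0" "x t \<in> positive_orthant"
  shows "((\<lambda>s. volterra4 E3 (x s)) has_real_derivative lyapunov_derivative (x t)) (at t within {0..})"
proof -
  obtain S V I1 I2 where xt: "x t = (S, V, I1, I2)"
    by (cases "x t")
  have pos: "S > 0" "V > 0" "I1 > 0" "I2 > 0"
    using \<open>x t \<in> positive_orthant\<close> by (simp_all add: xt positive_orthant_def)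
  have "(\<lambda>s. volterra4 E3 (x s)) = (\<lambda>s. volterra Ss (fst (x s)) + volterra Vs (fst (snd (x s)))
      + volterra I1s (fst (snd (snd (x s)))) + volterra I2s (snd (snd (snd (x s)))))"
    by (rule ext) (metis volterra4.simps prod.collapse)
  then have "((\<lambda>s. volterra4 E3 (x s)) has_real_derivative
      (1 - Ss / S) * (Lam - F1 S I1 - F2 S I2 - (r + mu) * S)
    + (1 - Vs / V) * (r * S - (mu + k * I2) * V)
    + (1 - I1s / I1) * (F1 S I1 - (gam1 + v1 + mu) * I1)
    + (1 - I2s / I2) * (F2 S I2 + k * I2 * V - (gam2 + v2 + mu) * I2)) (at t within {0..})"
    using is_solutionD[OF sol \<open>t \<ge> 0\<close> xt] pos equilibrium_pos
    by (auto intro!: DERIV_add volterra_has_derivative simp: xt)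
  then show ?thesis
    using lyapunov_derivative_eq[OF pos] by (simp add: xt)
qed

theorem E3_globally_asymptotically_stable:
  assumes neg: "\<And>z. z \<in> positive_orthant \<Longrightarrow> z \<noteq> E3 \<Longrightarrow> lyapunov_derivative z < 0"
  shows "globally_asymptotically_stable Lam mu r k gam1 gam2 v1 v2 F1 F2 E3"
proof -
  have nonpos: "lyapunov_derivative z \<le> 0" if "z \<in> positive_orthant" for z
    using neg[OF that] lyapunov_derivative_E3 by (cases "z = E3") auto
  have "E3 \<in> positive_orthant"
    using equilibrium_pos by (simp add: positive_orthant_def)
  then interpret strict_lyapunov_function positive_orthant E3 "volterra4 E3" lyapunov_derivative
    using continuous_on_lyapunov_derivative nonpos neg by (rule strict_lyapunov_function_volterra4)
  have "trajectory x" if "is_solution Lam mu r k gam1 gam2 v1 v2 F1 F2 x" "pos4 (x 0)" for x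
    using that is_solution_continuous solution_lyapunov_derivative
    by (simp add: trajectory_def pos4_iff_positive_orthant)
  then show ?thesis
    unfolding globally_asymptotically_stable_def
    using trajectory_stable trajectory_tendsto by meson
qed

end

theorem mainTheorem16:
  fixes Lam mu r k gam1 gam2 v1 v2 :: real
    and F1 F2 f1 f2 g1 g2 :: "real \<Rightarrow> real \<Rightarrow> real"
    and Ss Vs I1s I2s :: real
  assumes "Lam > 0" "mu > 0" "r > 0" "k > 0" "gam1 > 0" "gam2 > 0" "v1 \<ge> 0" "v2 \<ge> 0"
    and "incidence_hyps F1 f1 g1" and "incidence_hyps F2 f2 g2"
    and "is_equilibrium Lam mu r k gam1 gam2 v1 v2 F1 F2 (Ss, Vs, I1s, I2s)"
    and "Ss > 0" "Vs > 0" "I1s > 0" "I2s > 0"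
    and "\<And>S V I1 I2. S > 0 \<Longrightarrow> V > 0 \<Longrightarrow> I1 > 0 \<Longrightarrow> I2 > 0 \<Longrightarrow>
           (S, V, I1, I2) \<noteq> (Ss, Vs, I1s, I2s) \<Longrightarrow>
           F1 Ss I1s * (2 - Ss / S - S * g1 S I1 / (Ss * g1 Ss I1s))
         + F2 Ss I2s * (2 - Ss / S - S * g2 S I2 / (Ss * g2 Ss I2s))
         + r * Ss * (3 - Ss / S - V / Vs - S * Vs / (Ss * V))
         + mu * Ss * (2 - Ss / S - S / Ss)
         + I1 * (Ss * g1 S I1 - (gam1 + v1 + mu))
         + I2 * (Ss * g2 S I2 + k * Vs - (gam2 + v2 + mu)) < 0"
  shows "globally_asymptotically_stable Lam mu r k gam1 gam2 v1 v2 F1 F2 (Ss, Vs, I1s, I2s)"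
proof -
  interpret two_strain_model Lam mu r k gam1 gam2 v1 v2 F1 F2 f1 f2 g1 g2 Ss Vs I1s I2s
    using assms by unfold_locales auto
  show ?thesis
  proof (rule E3_globally_asymptotically_stable)
    fix z assume "z \<in> positive_orthant" "z \<noteq> E3"
    then show "lyapunov_derivative z < 0"
      using assms(16) by (cases z) (auto simp: lyapunov_derivative_def positive_orthant_def)
  qed
qed

end
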